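(* Let $m,d\in\mathbb N$ and consider the two-layer model $f_\theta(x)=\sum_{i=1}^m a_i\tanh(w_i^\top x)$, $x\in\mathbb R^d$, $\theta=(a_i,w_i)_{i=1}^m\in\mathbb R^{m(d+1)}$. For every integer $0\leq k\leq m$ and every $f^*\in\mathcal F^{\mathrm{NN}}_k\setminus\mathcal F^{\mathrm{NN}}_{k-1}$, the optimistic sample size is $O_{f_\theta}(f^* )=k(d+1)$.
   Context: For $k\geq1$, $\mathcal F^{\mathrm{NN}}_k=\{x\mapsto\sum_{i=1}^k a_i\tanh(w_i^\top x): a_i\in\mathbb R,\ w_i\in\mathbb R^d\}$; $\mathcal F^{\mathrm{NN}}_0=\{0\}$ (the zero function) and $\mathcal F^{\mathrm{NN}}_{-1}=\emptyset$. The loss $\ell:\mathbb R\times\mathbb R\to[0,\infty)$ is continuously differentiable with $\ell(u,v)=0$ iff $u=v$. For $f^*$ in the function space of $f_\theta$: $\mathcal M_{f^*}=\{\theta:f_\theta=f^*\}$; a dataset of size $n$ from $f^*$ is $\{(x_i,f^*(x_i))\}_{i=1}^n$ with empirical loss $\frac1n\sum_i\ell(u(x_i),f^*(x_i))$ for a function $u$ (identically $0$ if $n=0$); the tangent hyperplane at $\theta'$ is $\{f(\cdot;\theta')+a^\top\nabla_\theta f(\cdot;\theta'):a\in\mathbb R^{m(d+1)}\}$; $f^*$ has $n$-sample LLR-guarantee if for some dataset of size $n$ from $f^*$ and some $\theta'\in\mathcal M_{f^*}$ the set of minimizers of the empirical loss over the tangent hyperplane at $\theta'$ is exactly $\{f^*\}$;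 the optimistic sample size $O_{f_\theta}(f^* )$ is the smallest such $n\geq0$. *)

theory Defs
  imports "HOL-Analysis.Analysis"
begin

text \<open>Two-layer tanh network with m = CARD('m) neurons on inputs x in R^d, d = CARD('d).
  A parameter theta = (a_i, w_i)_{i} is an element of (real \<times> (real^'d))^'m, i.e. of R^{m(d+1)}.\<close>
definition nn_model :: "(real \<times> (real^'d))^'m::finite \<Rightarrow> real^'d \<Rightarrow> real" where
  "nn_model \<theta> x = (\<Sum>i\<in>UNIV. fst (\<theta> $ i) * tanh (snd (\<theta> $ i) \<bullet> x))"

definition NN_class :: "int \<Rightarrow> (real^'d \<Rightarrow> real) set" where
  "NN_class k = (if k < 0 then {} else if k = 0 then {\<lambda>x. 0}
     else {f. \<exists>(a::nat \<Rightarrow> real) (w::nat \<Rightarrow> real^'d).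
               f = (\<lambda>x. \<Sum>i<nat k. a i * tanh (w i \<bullet> x))})"

definition admissible_loss :: "(real \<times> real \<Rightarrow> real) \<Rightarrow> bool" where
  "admissible_loss loss \<longleftrightarrow> (\<forall>z. loss z \<ge> 0) \<and> (\<forall>u v. loss (u, v) = 0 \<longleftrightarrow> u = v) \<and>
     (\<exists>D :: real \<times> real \<Rightarrow> (real \<times> real) \<Rightarrow>\<^sub>L real.
        (\<forall>z. (loss has_derivative blinfun_apply (D z)) (at z)) \<and> continuous_on UNIV D)"

definition target_set :: "(real^'d \<Rightarrow> real) \<Rightarrow> ((real \<times> (real^'d))^'m::finite) set" where
  "target_set fs = {\<theta>. nn_model \<theta> = fs}"

text \<open>Empirical loss of u on the dataset {(x_i, f*(x_i))}, xs the list of inputs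
  (identically 0 if the dataset is empty; note real division by 0 is 0).\<close>
definition emp_loss :: "(real \<times> real \<Rightarrow> real) \<Rightarrow> (real^'d \<Rightarrow> real) \<Rightarrow> (real^'d) list
    \<Rightarrow> (real^'d \<Rightarrow> real) \<Rightarrow> real" where
  "emp_loss loss fs xs u = (if xs = [] then 0
     else (\<Sum>i<length xs. loss (u (xs ! i), fs (xs ! i))) / real (length xs))"

text \<open>Tangent hyperplane at theta': f(.;theta') + a^T grad_theta f(.;theta'),
  where a^T grad_theta f(x;theta') is the Frechet derivative of theta \<mapsto> f(x;theta) at theta'
  applied to the direction a.\<close>
definition tangent_hyperplane :: "(real \<times> (real^'d))^'m::finite \<Rightarrow> (real^'d \<Rightarrow> real) set" where
  "tangent_hyperplane \<theta>' = {u. \<exists>a :: (real \<times> (real^'d))^'m.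
      u = (\<lambda>x. nn_model \<theta>' x + frechet_derivative (\<lambda>\<theta>. nn_model \<theta> x) (at \<theta>') a)}"

definition minimizers_on :: "('f \<Rightarrow> real) \<Rightarrow> 'f set \<Rightarrow> 'f set" where
  "minimizers_on L S = {u \<in> S. \<forall>v\<in>S. L u \<le> L v}"

definition LLR_guarantee ::
    "'m::finite itself \<Rightarrow> (real \<times> real \<Rightarrow> real) \<Rightarrow> (real^'d \<Rightarrow> real) \<Rightarrow> nat \<Rightarrow> bool" where
  "LLR_guarantee _ loss fs n \<longleftrightarrow> (\<exists>xs (\<theta>' :: (real \<times> (real^'d))^'m). length xs = n \<and>
      \<theta>' \<in> target_set fs \<and>
      minimizers_on (emp_loss loss fs xs) (tangent_hyperplane \<theta>') = {fs})"

definition optimistic_sample_size ::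
    "'m::finite itself \<Rightarrow> (real \<times> real \<Rightarrow> real) \<Rightarrow> (real^'d \<Rightarrow> real) \<Rightarrow> nat" where
  "optimistic_sample_size M loss fs = (LEAST n. LLR_guarantee M loss fs n)"

end

(*
  Upper bound: a target with k neurons is realised by parameters supported on k neurons, so the
  tangent features x \<mapsto> \<nabla>\<^sub>\<theta> f(x; \<theta>) span a space of dimension at most k(d+1); sampling
  k(d+1) points whose features span the same space forces every interpolating tangent function
  to be f* itself, and interpolants are exactly the minimizers of an admissible loss.

  Lower bound: merging neurons with equal or opposite input weights rewrites f* with at least k
  neurons whose weights are nonzero and pairwise non-parallel.  For such weights the functions
  tanh (w\<^sub>j \<bullet> x) and (b \<bullet> x) (1 - tanh\<^sup>2 (w\<^sub>j \<bullet> x)) are linearly independent: along a generic line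
  the frequencies |w\<^sub>j \<bullet> z| are distinct, and the terms are separated by their decay rates at
  infinity.  Hence the tangent directions supported on these neurons form a k(d+1)-dimensional
  space on which the tangent map is injective, and with fewer samples some nonzero direction
  vanishes at all data points and produces a second minimizer.
*)
theory Submission
  imports Defs "HOL-Real_Asymp.Real_Asymp"
begin

section \<open>Independence of the tanh features in one variable\<close>

lemma sum_of_limits_eq_zero:
  fixes h :: "'i \<Rightarrow> 'b \<Rightarrow> 'a::{t2_space,topological_comm_monoid_add}"
  assumes "F \<noteq> bot" "\<forall>\<^sub>F t in F. (\<Sum>g\<in>G. h g t) = 0" "\<And>g. g \<in> G \<Longrightarrow> (h g \<longlongrightarrow> l g) F"
  shows "(\<Sum>g\<in>G. l g) = 0"
proof -
  have "((\<lambda>t. \<Sum>g\<in>G. h g t) \<longlongrightarrow> (\<Sum>g\<in>G. l g)) F" by (rule tendsto_sum) (rule assms(3))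
  then have "((\<lambda>t. 0) \<longlongrightarrow> (\<Sum>g\<in>G. l g)) F" using assms(2) by (rule Lim_transform_eventually)
  then show ?thesis using assms(1) tendsto_const tendsto_unique by metis
qed

lemma tendsto_tanh_scaled_at_top:
  fixes c :: real assumes "c > 0"
  shows "((\<lambda>t. tanh (c * t)) \<longlongrightarrow> 1) at_top"
    and "((\<lambda>t. t * (1 - tanh (c * t)^2)) \<longlongrightarrow> 0) at_top"
  using assms by real_asymp+

lemma tendsto_tanh_minus_one_times_exp:
  fixes c \<mu> :: real assumes "0 < \<mu>" "\<mu> \<le> c"
  shows "((\<lambda>t. (tanh (c * t) - 1) * exp (2 * \<mu> * t) / t) \<longlongrightarrow> 0) at_top"
    and "((\<lambda>t. (tanh (c * t) - 1) * exp (2 * \<mu> * t)) \<longlongrightarrow> (if c = \<mu> then -2 else 0)) at_top"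
proof -
  consider "c = \<mu>" | "\<mu> < c" using assms(2) by linarith
  then show "((\<lambda>t. (tanh (c * t) - 1) * exp (2 * \<mu> * t) / t) \<longlongrightarrow> 0) at_top"
  proof cases
    case 1 then show ?thesis using assms by real_asymp
  next
    case 2 then show ?thesis using assms by real_asymp
  qed
  show "((\<lambda>t. (tanh (c * t) - 1) * exp (2 * \<mu> * t)) \<longlongrightarrow> (if c = \<mu> then -2 else 0)) at_top"
  proof (cases "c = \<mu>")
    case True then show ?thesis using assms by simp real_asymp
  next
    case False then have "\<mu> < c" using assms by simp
    then show ?thesis using assms False by simp real_asymp
  qed
qed

lemma tendsto_sech_sq_times_exp:
  fixes c \<mu> :: real assumes "0 < \<mu>" "\<mu> \<le> c"
  shows "((\<lambda>t. (1 - tanh (c * t)^2) * exp (2 * \<mu> * t)) \<longlongrightarrow> (if c = \<mu> then 4 else 0)) at_top"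
proof (cases "c = \<mu>")
  case True then show ?thesis using assms by simp real_asymp
next
  case False then have "\<mu> < c" using assms by simp
  then show ?thesis using assms False by simp real_asymp
qed

lemma tendsto_t_sech_sq_times_exp:
  fixes c \<mu> :: real assumes "0 < \<mu>" "\<mu> < c"
  shows "((\<lambda>t. t * (1 - tanh (c * t)^2) * exp (2 * \<mu> * t)) \<longlongrightarrow> 0) at_top"
  using assms by real_asymp

lemma tanh_family_coeffs_sum_eq_zero:
  fixes lam alpha gam :: "'i \<Rightarrow> real"
  assumes "\<And>g. g \<in> G \<Longrightarrow> lam g > 0"
    and eq: "\<And>t. (\<Sum>g\<in>G. alpha g * tanh (lam g * t) + gam g * (t * (1 - tanh (lam g * t)^2))) = 0"
  shows "sum alpha G = 0"
proof -
  have "(\<Sum>g\<in>G. alpha g * 1 + gam g * 0) = 0"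
  proof (rule sum_of_limits_eq_zero)
    show "\<forall>\<^sub>F t in at_top. (\<Sum>g\<in>G. alpha g * tanh (lam g * t) + gam g * (t * (1 - tanh (lam g * t)^2))) = 0"
      using eq by simp
    fix g assume "g \<in> G"
    then show "((\<lambda>t. alpha g * tanh (lam g * t) + gam g * (t * (1 - tanh (lam g * t)^2)))
        \<longlongrightarrow> alpha g * 1 + gam g * 0) at_top"
      using assms(1) by (intro tendsto_add tendsto_mult_left tendsto_tanh_scaled_at_top)
  qed simp
  then show ?thesis by simp
qed

text \<open>Once \<open>\<Sum> alpha = 0\<close>, the terms decay like \<open>tanh (c t) - 1 \<sim> -2 e\<^sup>-\<^sup>2\<^sup>c\<^sup>t\<close> and
  \<open>t (1 - tanh\<^sup>2 (c t)) \<sim> 4 t e\<^sup>-\<^sup>2\<^sup>c\<^sup>t\<close>.  Multiplying by \<open>e\<^sup>2\<^sup>\<mu>\<^sup>t / t\<close> for the lowest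
  frequency \<open>\<mu>\<close> isolates the coefficient of the \<open>t\<close>-weighted term; once that vanishes,
  multiplying by \<open>e\<^sup>2\<^sup>\<mu>\<^sup>t\<close> isolates the other one.\<close>
lemma tanh_family_lowest_frequency_sech_coeff_zero:
  fixes lam alpha gam :: "'i \<Rightarrow> real"
  assumes "finite G" "g0 \<in> G" "lam g0 > 0" and lowest: "\<And>g. g \<in> G \<Longrightarrow> g \<noteq> g0 \<Longrightarrow> lam g > lam g0"
    and eq: "\<And>t. (\<Sum>g\<in>G. alpha g * (tanh (lam g * t) - 1) + gam g * (t * (1 - tanh (lam g * t)^2))) = 0"
  shows "gam g0 = 0"
proof -
  define \<mu> where "\<mu> = lam g0"
  have \<mu>: "\<mu> > 0" "\<And>g. g \<in> G \<Longrightarrow> \<mu> \<le> lam g" "\<And>g. g \<in> G \<Longrightarrow> lam g = \<mu> \<longleftrightarrow> g = g0"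
    using assms \<mu>_def by (auto simp: order_le_less dest: lowest)
  have "(\<Sum>g\<in>G. alpha g * 0 + gam g * (if lam g = \<mu> then 4 else 0)) = 0"
  proof (rule sum_of_limits_eq_zero)
    show "\<forall>\<^sub>F t in at_top. (\<Sum>g\<in>G. alpha g * ((tanh (lam g * t) - 1) * exp (2 * \<mu> * t) / t)
        + gam g * ((1 - tanh (lam g * t)^2) * exp (2 * \<mu> * t))) = 0"
    proof (rule eventually_mono[OF eventually_gt_at_top[of 0]])
      fix t :: real assume "t > 0"
      have "(\<Sum>g\<in>G. alpha g * ((tanh (lam g * t) - 1) * exp (2 * \<mu> * t) / t)
        + gam g * ((1 - tanh (lam g * t)^2) * exp (2 * \<mu> * t)))
        = (\<Sum>g\<in>G. alpha g * (tanh (lam g * t) - 1) + gam g * (t * (1 - tanh (lam g * t)^2)))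
          * exp (2 * \<mu> * t) / t"
        unfolding sum_distrib_right sum_divide_distrib
        using \<open>t > 0\<close> by (intro sum.cong refl) (simp add: field_simps)
      then show "(\<Sum>g\<in>G. alpha g * ((tanh (lam g * t) - 1) * exp (2 * \<mu> * t) / t)
        + gam g * ((1 - tanh (lam g * t)^2) * exp (2 * \<mu> * t))) = 0" by (simp add: eq)
    qed
    fix g assume "g \<in> G"
    then show "((\<lambda>t. alpha g * ((tanh (lam g * t) - 1) * exp (2 * \<mu> * t) / t)
        + gam g * ((1 - tanh (lam g * t)^2) * exp (2 * \<mu> * t)))
        \<longlongrightarrow> alpha g * 0 + gam g * (if lam g = \<mu> then 4 else 0)) at_top"
      using \<mu> by (intro tendsto_add tendsto_mult_left tendsto_tanh_minus_one_times_exp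
          tendsto_sech_sq_times_exp) auto
  qed simp
  also have "(\<Sum>g\<in>G. alpha g * 0 + gam g * (if lam g = \<mu> then 4 else 0))
      = (\<Sum>g\<in>G. if g = g0 then 4 * gam g0 else 0)" by (rule sum.cong) (auto simp: \<mu>(3))
  also have "\<dots> = 4 * gam g0" using \<open>finite G\<close> \<open>g0 \<in> G\<close> by simp
  finally show ?thesis by simp
qed

lemma tanh_family_lowest_frequency_tanh_coeff_zero:
  fixes lam alpha gam :: "'i \<Rightarrow> real"
  assumes "finite G" "g0 \<in> G" "lam g0 > 0" and lowest: "\<And>g. g \<in> G \<Longrightarrow> g \<noteq> g0 \<Longrightarrow> lam g > lam g0"
    and eq: "\<And>t. (\<Sum>g\<in>G. alpha g * (tanh (lam g * t) - 1) + gam g * (t * (1 - tanh (lam g * t)^2))) = 0"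
    and "gam g0 = 0"
  shows "alpha g0 = 0"
proof -
  define \<mu> where "\<mu> = lam g0"
  have \<mu>: "\<mu> > 0" "\<And>g. g \<in> G \<Longrightarrow> \<mu> \<le> lam g" "\<And>g. g \<in> G \<Longrightarrow> lam g = \<mu> \<longleftrightarrow> g = g0"
    using assms \<mu>_def by (auto simp: order_le_less dest: lowest)
  have "(\<Sum>g\<in>G. alpha g * (if lam g = \<mu> then -2 else 0) + 0) = 0"
  proof (rule sum_of_limits_eq_zero)
    show "\<forall>\<^sub>F t in at_top. (\<Sum>g\<in>G. alpha g * ((tanh (lam g * t) - 1) * exp (2 * \<mu> * t))
        + gam g * (t * (1 - tanh (lam g * t)^2) * exp (2 * \<mu> * t))) = 0"
    proof (intro always_eventually allI)
      fix t :: real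
      have "(\<Sum>g\<in>G. alpha g * ((tanh (lam g * t) - 1) * exp (2 * \<mu> * t))
        + gam g * (t * (1 - tanh (lam g * t)^2) * exp (2 * \<mu> * t)))
        = (\<Sum>g\<in>G. alpha g * (tanh (lam g * t) - 1) + gam g * (t * (1 - tanh (lam g * t)^2)))
          * exp (2 * \<mu> * t)"
        unfolding sum_distrib_right by (intro sum.cong refl) (simp add: algebra_simps)
      then show "(\<Sum>g\<in>G. alpha g * ((tanh (lam g * t) - 1) * exp (2 * \<mu> * t))
        + gam g * (t * (1 - tanh (lam g * t)^2) * exp (2 * \<mu> * t))) = 0" by (simp add: eq)
    qed
    fix g assume "g \<in> G"
    show "((\<lambda>t. alpha g * ((tanh (lam g * t) - 1) * exp (2 * \<mu> * t))
        + gam g * (t * (1 - tanh (lam g * t)^2) * exp (2 * \<mu> * t))) \<longlongrightarrow>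
        alpha g * (if lam g = \<mu> then -2 else 0) + 0) at_top"
    proof (cases "g = g0")
      case True
      have "((\<lambda>t. (tanh (lam g * t) - 1) * exp (2 * \<mu> * t)) \<longlongrightarrow> (if lam g = \<mu> then -2 else 0))
          at_top" using \<mu> \<open>g \<in> G\<close> by (intro tendsto_tanh_minus_one_times_exp) auto
      from tendsto_mult_left[OF this, of "alpha g"] show ?thesis using True \<open>gam g0 = 0\<close> by simp
    next
      case False
      then have "\<mu> < lam g" using lowest[OF \<open>g \<in> G\<close>] by (simp add: \<mu>_def)
      then show ?thesis using \<mu> False \<open>g \<in> G\<close>
        by (intro tendsto_add tendsto_mult_left tendsto_tanh_minus_one_times_exp
            tendsto_mult_right_zero tendsto_t_sech_sq_times_exp) auto
    qed
  qed simp
  also have "(\<Sum>g\<in>G. alpha g * (if lam g = \<mu> then -2 else 0) + 0)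
      = (\<Sum>g\<in>G. if g = g0 then - 2 * alpha g0 else 0)" by (rule sum.cong) (auto simp: \<mu>(3))
  also have "\<dots> = - 2 * alpha g0" using \<open>finite G\<close> \<open>g0 \<in> G\<close> by simp
  finally show ?thesis by simp
qed

lemma tanh_family_lowest_frequency_coeffs_zero:
  fixes lam alpha gam :: "'i \<Rightarrow> real"
  assumes "finite G" "g0 \<in> G" "\<And>g. g \<in> G \<Longrightarrow> lam g > 0"
    and lowest: "\<And>g. g \<in> G \<Longrightarrow> g \<noteq> g0 \<Longrightarrow> lam g > lam g0"
    and eq: "\<And>t. (\<Sum>g\<in>G. alpha g * tanh (lam g * t) + gam g * (t * (1 - tanh (lam g * t)^2))) = 0"
  shows "alpha g0 = 0 \<and> gam g0 = 0"
proof -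
  have "sum alpha G = 0" using assms(3) eq by (rule tanh_family_coeffs_sum_eq_zero)
  then have shifted: "(\<Sum>g\<in>G. alpha g * (tanh (lam g * t) - 1) + gam g * (t * (1 - tanh (lam g * t)^2))) = 0"
    for t using eq[of t] by (simp add: algebra_simps sum.distrib sum_subtractf)
  have "lam g0 > 0" using assms(2,3) by blast
  have "gam g0 = 0"
    using assms(1,2) \<open>lam g0 > 0\<close> lowest shifted by (rule tanh_family_lowest_frequency_sech_coeff_zero)
  moreover have "alpha g0 = 0"
    using assms(1,2) \<open>lam g0 > 0\<close> lowest shifted \<open>gam g0 = 0\<close>
    by (rule tanh_family_lowest_frequency_tanh_coeff_zero)
  ultimately show ?thesis by simp
qed

lemma tanh_family_independent_1d:
  fixes lam alpha gam :: "'i \<Rightarrow> real"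
  assumes "finite G" "inj_on lam G" "\<And>g. g \<in> G \<Longrightarrow> lam g > 0"
    and "\<And>t. (\<Sum>g\<in>G. alpha g * tanh (lam g * t) + gam g * (t * (1 - tanh (lam g * t)^2))) = 0"
  shows "\<forall>g\<in>G. alpha g = 0 \<and> gam g = 0"
  using assms
proof (induction G rule: finite_ranking_induct[where f = "\<lambda>g. - lam g"])
  case (insert g0 G)
  show ?case
  proof (cases "g0 \<in> G")
    case True
    then have "insert g0 G = G" by blast
    from insert.IH[OF insert.prems[unfolded this]] show ?thesis unfolding \<open>insert g0 G = G\<close> .
  next
    case False
    have lowest: "lam g > lam g0" if "g \<in> insert g0 G" "g \<noteq> g0" for g
    proof -
      have "lam g0 \<le> lam g" using insert.hyps(2) that by force
      moreover have "lam g \<noteq> lam g0" using inj_onD[OF insert.prems(1)] that by blast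
      ultimately show ?thesis by simp
    qed
    have g0: "alpha g0 = 0 \<and> gam g0 = 0"
      by (rule tanh_family_lowest_frequency_coeffs_zero[OF _ _ _ lowest insert.prems(3)])
        (use insert.hyps(1) insert.prems(2) in auto)
    then have "(\<Sum>g\<in>G. alpha g * tanh (lam g * t) + gam g * (t * (1 - tanh (lam g * t)^2))) = 0" for t
      using insert.prems(3)[of t] insert.hyps(1) False by simp
    moreover have "inj_on lam G" using insert.prems(1) by (rule inj_on_subset) blast
    ultimately have "\<forall>g\<in>G. alpha g = 0 \<and> gam g = 0" using insert.IH insert.prems(2) by blast
    with g0 show ?thesis by blast
  qed
qed simp

section \<open>Independence of the tanh features in several variables\<close>

lemma finite_line_hyperplane_intersections:
  fixes N :: "'a::real_inner set"
  assumes "finite N" "\<And>n. n \<in> N \<Longrightarrow> n \<bullet> z \<noteq> 0 \<or> n \<bullet> y \<noteq> 0"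
  shows "finite {s::real. \<exists>n\<in>N. n \<bullet> (z + s *\<^sub>R y) = 0}"
proof (rule finite_subset)
  show "{s::real. \<exists>n\<in>N. n \<bullet> (z + s *\<^sub>R y) = 0} \<subseteq> (\<lambda>n. - (n \<bullet> z) / (n \<bullet> y)) ` N"
  proof
    fix s assume "s \<in> {s::real. \<exists>n\<in>N. n \<bullet> (z + s *\<^sub>R y) = 0}"
    then obtain n where n: "n \<in> N" "n \<bullet> z + s * (n \<bullet> y) = 0" by (auto simp: inner_add_right)
    then have "n \<bullet> y \<noteq> 0" using assms(2) by auto
    with n show "s \<in> (\<lambda>n. - (n \<bullet> z) / (n \<bullet> y)) ` N"
      by (intro image_eqI[of _ _ n]) (auto simp: field_simps)
  qed
qed (use assms(1) in simp)

lemma exists_off_hyperplanes: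
  fixes N :: "'a::real_inner set"
  assumes "finite N" "0 \<notin> N"
  shows "\<exists>z. \<forall>n\<in>N. n \<bullet> z \<noteq> 0"
  using assms
proof (induction N rule: finite_induct)
  case (insert n N)
  then obtain z where z: "\<forall>n\<in>N. n \<bullet> z \<noteq> 0" by auto
  have "finite {s::real. \<exists>n'\<in>insert n N. n' \<bullet> (z + s *\<^sub>R n) = 0}"
    using z insert by (intro finite_line_hyperplane_intersections) auto
  then obtain s where "s \<notin> {s::real. \<exists>n'\<in>insert n N. n' \<bullet> (z + s *\<^sub>R n) = 0}"
    using ex_new_if_finite[OF infinite_UNIV_char_0] by blast
  then show ?case by blast
qed simp

lemma eq_zero_if_orthogonal_off_hyperplanes:
  fixes N :: "'a::real_inner set"
  assumes "finite N" "0 \<notin> N" and orth: "\<And>z. \<forall>n\<in>N. n \<bullet> z \<noteq> 0 \<Longrightarrow> b \<bullet> z = 0"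
  shows "b = 0"
proof -
  obtain z where z: "\<forall>n\<in>N. n \<bullet> z \<noteq> 0" using exists_off_hyperplanes[OF assms(1,2)] by blast
  define B where "B = {s::real. \<exists>n\<in>N. n \<bullet> (z + s *\<^sub>R b) = 0}"
  have "finite B" unfolding B_def using assms(1) z by (intro finite_line_hyperplane_intersections) auto
  then obtain s1 s2 where "s1 \<notin> B" "s2 \<notin> B" "s1 \<noteq> s2"
    by (metis finite_insert ex_new_if_finite[OF infinite_UNIV_char_0] insertCI)
  then have "b \<bullet> (z + s1 *\<^sub>R b) = 0" "b \<bullet> (z + s2 *\<^sub>R b) = 0" by (auto simp: B_def intro!: orth)
  then have "s1 * (b \<bullet> b) = s2 * (b \<bullet> b)" unfolding inner_add_right inner_scaleR_right by linarith
  with \<open>s1 \<noteq> s2\<close> show ?thesis by simp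
qed

lemma tanh_mult_sgn_abs:
  fixes c t :: real
  shows "tanh (t * c) = sgn c * tanh (\<bar>c\<bar> * t)" and "tanh (t * c)^2 = tanh (\<bar>c\<bar> * t)^2"
  by (cases "c \<ge> 0"; simp add: sgn_if mult.commute)+

text \<open>Restricting to the line \<open>t z\<close> turns a relation between the features into a relation in
  one variable with frequencies \<open>\<bar>w j \<bullet> z\<bar>\<close>.\<close>
lemma tanh_family_independent_along:
  fixes w be :: "'i \<Rightarrow> 'a::real_inner" and al :: "'i \<Rightarrow> real"
  assumes "finite J" "\<And>j. j \<in> J \<Longrightarrow> w j \<bullet> z \<noteq> 0" "inj_on (\<lambda>j. \<bar>w j \<bullet> z\<bar>) J"
    and eq: "\<And>x. (\<Sum>j\<in>J. al j * tanh (w j \<bullet> x) + (be j \<bullet> x) * (1 - tanh (w j \<bullet> x)^2)) = 0"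
  shows "\<forall>j\<in>J. al j = 0 \<and> be j \<bullet> z = 0"
proof -
  have "\<forall>j\<in>J. sgn (w j \<bullet> z) * al j = 0 \<and> be j \<bullet> z = 0"
  proof (rule tanh_family_independent_1d[OF assms(1,3)])
    fix t
    have "(\<Sum>j\<in>J. sgn (w j \<bullet> z) * al j * tanh (\<bar>w j \<bullet> z\<bar> * t)
        + (be j \<bullet> z) * (t * (1 - tanh (\<bar>w j \<bullet> z\<bar> * t)^2)))
      = (\<Sum>j\<in>J. al j * tanh (w j \<bullet> (t *\<^sub>R z)) + (be j \<bullet> (t *\<^sub>R z)) * (1 - tanh (w j \<bullet> (t *\<^sub>R z))^2))"
    proof (intro sum.cong refl)
      fix j
      have e: "w j \<bullet> (t *\<^sub>R z) = t * (w j \<bullet> z)" "be j \<bullet> (t *\<^sub>R z) = t * (be j \<bullet> z)" by simp_all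
      show "sgn (w j \<bullet> z) * al j * tanh (\<bar>w j \<bullet> z\<bar> * t)
          + (be j \<bullet> z) * (t * (1 - tanh (\<bar>w j \<bullet> z\<bar> * t)^2))
        = al j * tanh (w j \<bullet> (t *\<^sub>R z)) + (be j \<bullet> (t *\<^sub>R z)) * (1 - tanh (w j \<bullet> (t *\<^sub>R z))^2)"
        unfolding e tanh_mult_sgn_abs(2)[of t "w j \<bullet> z"]
        unfolding tanh_mult_sgn_abs(1)[of t "w j \<bullet> z"] by (simp only: mult_ac)
    qed
    also have "\<dots> = 0" by (rule eq)
    finally show "(\<Sum>j\<in>J. sgn (w j \<bullet> z) * al j * tanh (\<bar>w j \<bullet> z\<bar> * t)
        + (be j \<bullet> z) * (t * (1 - tanh (\<bar>w j \<bullet> z\<bar> * t)^2))) = 0" .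
  qed (use assms(2) in auto)
  then show ?thesis using assms(2) by (auto simp: sgn_zero_iff)
qed

lemma tanh_family_independent:
  fixes w be :: "'i \<Rightarrow> 'a::real_inner" and al :: "'i \<Rightarrow> real"
  assumes "finite J" and nonzero: "\<And>j. j \<in> J \<Longrightarrow> w j \<noteq> 0"
    and not_parallel: "\<And>i j. i \<in> J \<Longrightarrow> j \<in> J \<Longrightarrow> i \<noteq> j \<Longrightarrow> w i \<noteq> w j \<and> w i \<noteq> - w j"
    and eq: "\<And>x. (\<Sum>j\<in>J. al j * tanh (w j \<bullet> x) + (be j \<bullet> x) * (1 - tanh (w j \<bullet> x)^2)) = 0"
  shows "\<forall>j\<in>J. al j = 0 \<and> be j = 0"
proof -
  define D where "D = {(i, j) \<in> J \<times> J. i \<noteq> j}"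
  \<comment> \<open>a direction \<open>z\<close> off the hyperplanes normal to \<open>N\<close> separates the values \<open>\<bar>w j \<bullet> z\<bar>\<close>\<close>
  define N where "N = w ` J \<union> (\<lambda>(i, j). w i - w j) ` D \<union> (\<lambda>(i, j). w i + w j) ` D"
  have "finite N" unfolding N_def D_def using \<open>finite J\<close> by (auto intro: finite_subset[of _ "J \<times> J"])
  moreover have "0 \<notin> N"
    using nonzero not_parallel by (force simp: N_def D_def add_eq_0_iff)
  moreover have along: "\<forall>j\<in>J. al j = 0 \<and> be j \<bullet> z = 0" if z: "\<forall>n\<in>N. n \<bullet> z \<noteq> 0" for z
  proof (rule tanh_family_independent_along[OF \<open>finite J\<close> _ _ eq])
    show "w j \<bullet> z \<noteq> 0" if "j \<in> J" for j using z that by (auto simp: N_def)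
    show "inj_on (\<lambda>j. \<bar>w j \<bullet> z\<bar>) J"
    proof (rule inj_onI, rule ccontr)
      fix i j assume ij: "i \<in> J" "j \<in> J" "\<bar>w i \<bullet> z\<bar> = \<bar>w j \<bullet> z\<bar>" "i \<noteq> j"
      then have "(w i - w j) \<bullet> z \<noteq> 0" "(w i + w j) \<bullet> z \<noteq> 0"
        using z by (auto simp: N_def D_def)
      with ij(3) show False by (auto simp: inner_diff_left inner_add_left abs_if split: if_splits)
    qed
  qed
  ultimately show ?thesis
    using exists_off_hyperplanes eq_zero_if_orthogonal_off_hyperplanes by metis
qed

section \<open>Reduced representations\<close>

lemma sum_tanh_absorb_parallel:
  fixes v :: "'i \<Rightarrow> 'a::real_inner"
  assumes "finite J" "j \<in> J" "s \<in> {1, -1}" "v j = s *\<^sub>R u"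
  shows "(\<Sum>l\<in>J. (c l + (if l = j then s * a else 0)) * tanh (v l \<bullet> x))
    = a * tanh (u \<bullet> x) + (\<Sum>l\<in>J. c l * tanh (v l \<bullet> x))"
proof -
  have "(\<Sum>l\<in>J. (c l + (if l = j then s * a else 0)) * tanh (v l \<bullet> x))
      = (\<Sum>l\<in>J. c l * tanh (v l \<bullet> x) + (if l = j then s * a * tanh (v l \<bullet> x) else 0))"
    by (intro sum.cong) (auto simp: distrib_right)
  also have "\<dots> = (\<Sum>l\<in>J. c l * tanh (v l \<bullet> x)) + s * a * tanh (v j \<bullet> x)"
    using assms(1,2) by (simp add: sum.distrib)
  also have "s * a * tanh (v j \<bullet> x) = a * tanh (u \<bullet> x)" using assms(3,4) by auto
  finally show ?thesis by simp
qed

lemma tanh_sum_reduced_form: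
  fixes A :: "'i \<Rightarrow> real" and w :: "'i \<Rightarrow> 'a::real_inner"
  assumes "finite S"
  shows "\<exists>J\<subseteq>S. \<exists>c. (\<forall>j\<in>J. A j \<noteq> 0 \<and> w j \<noteq> 0)
    \<and> (\<forall>i\<in>J. \<forall>j\<in>J. i \<noteq> j \<longrightarrow> w i \<noteq> w j \<and> w i \<noteq> - w j)
    \<and> (\<forall>x. (\<Sum>i\<in>S. A i * tanh (w i \<bullet> x)) = (\<Sum>j\<in>J. c j * tanh (w j \<bullet> x)))"
  using assms
proof (induction S rule: finite_induct)
  case (insert i S)
  then obtain J c where J: "J \<subseteq> S" "\<forall>j\<in>J. A j \<noteq> 0 \<and> w j \<noteq> 0"
    "\<forall>i\<in>J. \<forall>j\<in>J. i \<noteq> j \<longrightarrow> w i \<noteq> w j \<and> w i \<noteq> - w j"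
    and sum_S: "\<And>x. (\<Sum>i\<in>S. A i * tanh (w i \<bullet> x)) = (\<Sum>j\<in>J. c j * tanh (w j \<bullet> x))" by blast
  have "finite J" using J(1) insert.hyps(1) finite_subset by blast
  have sum_insert: "(\<Sum>l\<in>insert i S. A l * tanh (w l \<bullet> x))
      = A i * tanh (w i \<bullet> x) + (\<Sum>j\<in>J. c j * tanh (w j \<bullet> x))" for x
    using insert.hyps by (simp add: sum_S)
  consider "A i = 0 \<or> w i = 0" | j s where "j \<in> J" "s \<in> {1, -1}" "w j = s *\<^sub>R w i"
    | "A i \<noteq> 0" "w i \<noteq> 0" "\<forall>j\<in>J. w j \<noteq> w i \<and> w j \<noteq> - w i" by fastforce
  then show ?case
  proof cases
    case 1
    then show ?thesis using J sum_insert by (intro exI[of _ J] conjI exI[of _ c]) auto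
  next
    case (2 j s)
    note absorb = sum_tanh_absorb_parallel[where v = w and u = "w i" and c = c and a = "A i", OF \<open>finite J\<close> 2]
    show ?thesis using J sum_insert absorb
      by (intro exI[of _ J] conjI exI[of _ "\<lambda>l. c l + (if l = j then s * A i else 0)"]) auto
  next
    case 3
    have "i \<notin> J" using J(1) insert.hyps(2) by auto
    then have "(\<Sum>l\<in>insert i J. (c(i := A i)) l * tanh (w l \<bullet> x))
        = A i * tanh (w i \<bullet> x) + (\<Sum>j\<in>J. c j * tanh (w j \<bullet> x))" for x
      using \<open>finite J\<close> by (auto intro!: sum.cong)
    moreover have "\<forall>a\<in>insert i J. \<forall>b\<in>insert i J. a \<noteq> b \<longrightarrow> w a \<noteq> w b \<and> w a \<noteq> - w b"
      using J(3) 3 by (auto simp: minus_equation_iff)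
    ultimately show ?thesis using J 3 sum_insert
      by (intro exI[of _ "insert i J"] conjI exI[of _ "c(i := A i)"]) auto
  qed
qed auto

lemma exists_nonzero_orthogonal_in_subspace:
  fixes V Y :: "'a::euclidean_space set"
  assumes "subspace V" "finite Y" "card Y < dim V"
  shows "\<exists>a\<in>V. a \<noteq> 0 \<and> (\<forall>y\<in>Y. a \<bullet> y = 0)"
proof (rule ccontr)
  assume no_orth: "\<not> ?thesis"
  define E where "E a = (\<Sum>y\<in>Y. (a \<bullet> y) *\<^sub>R y)" for a
  have "linear E" unfolding E_def
    by (rule linearI) (simp_all add: inner_add_left scaleR_add_left sum.distrib scaleR_sum_right)
  have "a = 0" if "a \<in> V" "E a = 0" for a
  proof -
    have "(\<Sum>y\<in>Y. (a \<bullet> y)^2) = a \<bullet> E a"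
      unfolding E_def by (simp add: inner_sum_right power2_eq_square)
    then have "\<forall>y\<in>Y. a \<bullet> y = 0" using that \<open>finite Y\<close> by (simp add: sum_nonneg_eq_0_iff)
    then show "a = 0" using no_orth that by blast
  qed
  then have "inj_on E V" by (simp add: linear_inj_on_iff_eq_0[OF \<open>linear E\<close> \<open>subspace V\<close>])
  moreover have "span V = V" using \<open>subspace V\<close> by simp
  ultimately have "dim (E ` V) = dim V" using \<open>linear E\<close> by (metis eucl.dim_image_eq)
  moreover have "E ` V \<subseteq> span Y" unfolding E_def by (intro image_subsetI span_sum span_scale span_base)
  then have "dim (E ` V) \<le> card Y" using \<open>finite Y\<close> by (rule dim_le_card)
  ultimately show False using assms(3) by simp
qed

lemma exists_list_determining_orthogonality:
  fixes g :: "'x \<Rightarrow> 'a::euclidean_space"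
  assumes "dim (range g) \<le> N"
  shows "\<exists>xs. length xs = N \<and> (\<forall>a. (\<forall>x\<in>set xs. a \<bullet> g x = 0) \<longrightarrow> (\<forall>x. a \<bullet> g x = 0))"
proof -
  obtain B where B: "B \<subseteq> range g" "independent B" "range g \<subseteq> span B"
    by (rule maximal_independent_subset)
  obtain X where X: "inj_on g X" "B = g ` X"
    using subset_image_inj[THEN iffD1, OF B(1)] by blast
  have "finite B" using B(2) by (rule independent_imp_finite)
  moreover have "card B \<le> N" using independent_card_le_dim[OF B(1,2)] assms by linarith
  ultimately have "finite X" "card X \<le> N" using X by (simp_all add: card_image finite_image_iff)
  then obtain l where l: "set l = X" "length l \<le> N" by (metis distinct_card finite_distinct_list)
  define xs where "xs = l @ replicate (N - length l) undefined"
  show ?thesis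
  proof (intro exI conjI allI impI)
    show "length xs = N" using l by (simp add: xs_def)
    fix a x assume "\<forall>x\<in>set xs. a \<bullet> g x = 0"
    then have "\<forall>b\<in>B. orthogonal a b" using l X(2) by (auto simp: xs_def orthogonal_def)
    moreover have "g x \<in> span B" using B(3) by blast
    ultimately have "orthogonal a (g x)" by (metis orthogonal_to_span)
    then show "a \<bullet> g x = 0" by (simp add: orthogonal_def)
  qed
qed

definition vec_supported_on :: "'n set \<Rightarrow> ('a::zero^'n) set" where
  "vec_supported_on J = {p. \<forall>i. i \<notin> J \<longrightarrow> p $ i = 0}"

lemma subspace_vec_supported_on: "subspace (vec_supported_on J :: ('a::real_vector^'n) set)"
  by (auto simp: subspace_def vec_supported_on_def)

lemma dim_vec_supported_on:
  "dim (vec_supported_on J :: ('a::euclidean_space^'n::finite) set) = card J * DIM('a)"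
proof -
  define B :: "('a^'n) set" where "B = (\<lambda>(i, b). axis i b) ` (J \<times> Basis)"
  have "independent B"
    by (rule independent_mono[OF independent_Basis]) (auto simp: B_def Basis_vec_def)
  have "span B \<subseteq> vec_supported_on J"
    by (rule span_minimal[OF _ subspace_vec_supported_on]) (auto simp: B_def vec_supported_on_def axis_def)
  moreover have "p \<in> span B" if "p \<in> vec_supported_on J" for p
  proof -
    have "(p \<bullet> b) *\<^sub>R b \<in> span B" if "b \<in> Basis" for b
    proof -
      obtain i u where iu: "b = axis i u" "u \<in> Basis" using \<open>b \<in> Basis\<close> by (auto simp: Basis_vec_def)
      show ?thesis
      proof (cases "i \<in> J")
        case True
        then have "b \<in> B" using iu by (auto simp: B_def)
        then show ?thesis by (intro span_scale span_base)
      next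
        case False then show ?thesis using \<open>p \<in> vec_supported_on J\<close> iu
          by (simp add: vec_supported_on_def inner_axis span_zero)
      qed
    qed
    then have "(\<Sum>b\<in>Basis. (p \<bullet> b) *\<^sub>R b) \<in> span B" by (rule span_sum)
    then show ?thesis by (simp add: euclidean_representation)
  qed
  ultimately have "span B = vec_supported_on J" by blast
  moreover have "card B = card J * DIM('a)"
  proof -
    have "inj_on (\<lambda>(i, b). axis i b :: 'a^'n) (J \<times> Basis)"
      by (auto simp: inj_on_def axis_eq_axis nonzero_Basis)
    then show ?thesis unfolding B_def by (simp add: card_image card_cartesian_product)
  qed
  ultimately show ?thesis using dim_span_eq_card_independent[OF \<open>independent B\<close>] by simp
qed

section \<open>The tangent hyperplane of the network\<close>

definition nn_model_grad :: "(real \<times> (real^'d))^'m::finite \<Rightarrow> real^'d \<Rightarrow> (real \<times> (real^'d))^'m" where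
  "nn_model_grad \<theta> x = (\<chi> i. (tanh (snd (\<theta>$i) \<bullet> x), (fst (\<theta>$i) * (1 - tanh (snd (\<theta>$i) \<bullet> x)^2)) *\<^sub>R x))"

lemma inner_nn_model_grad:
  "a \<bullet> nn_model_grad \<theta> x = (\<Sum>i\<in>UNIV. fst (a$i) * tanh (snd (\<theta>$i) \<bullet> x)
      + fst (\<theta>$i) * ((snd (a$i) \<bullet> x) * (1 - tanh (snd (\<theta>$i) \<bullet> x)^2)))"
proof -
  have "a \<bullet> nn_model_grad \<theta> x = (\<Sum>i\<in>UNIV. a$i \<bullet> nn_model_grad \<theta> x $ i)" by (rule inner_vec_def)
  then show ?thesis by (simp add: nn_model_grad_def inner_prod_def algebra_simps)
qed

lemma has_derivative_nn_model:
  fixes \<theta>' :: "(real \<times> (real^'d))^'m::finite" and x :: "real^'d"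
  shows "((\<lambda>\<theta>. nn_model \<theta> x) has_derivative (\<lambda>a. a \<bullet> nn_model_grad \<theta>' x)) (at \<theta>')"
proof -
  have coord: "bounded_linear (\<lambda>a::(real \<times> (real^'d))^'m. a $ i)" for i
    by (rule bounded_linear_vec_nth)
  have d_fst: "((\<lambda>\<theta>::(real \<times> (real^'d))^'m. fst (\<theta> $ i)) has_derivative (\<lambda>a. fst (a $ i))) (at \<theta>')" for i
    using bounded_linear_compose[OF bounded_linear_fst coord]
    by (simp add: bounded_linear_imp_has_derivative o_def)
  have d_inner: "((\<lambda>\<theta>::(real \<times> (real^'d))^'m. snd (\<theta> $ i) \<bullet> x) has_derivative (\<lambda>a. snd (a $ i) \<bullet> x)) (at \<theta>')" for i
    using bounded_linear_compose[OF bounded_linear_inner_left bounded_linear_compose[OF bounded_linear_snd coord]]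
    by (simp add: bounded_linear_imp_has_derivative o_def)
  have d_tanh: "((\<lambda>\<theta>::(real \<times> (real^'d))^'m. tanh (snd (\<theta> $ i) \<bullet> x)) has_derivative
      (\<lambda>a. (snd (a $ i) \<bullet> x) * (1 - tanh (snd (\<theta>' $ i) \<bullet> x)^2))) (at \<theta>')" for i
  proof -
    have "(tanh has_field_derivative (1 - tanh (snd (\<theta>' $ i) \<bullet> x)^2)) (at (snd (\<theta>' $ i) \<bullet> x))"
      using has_field_derivative_tanh[OF _ DERIV_ident, of "snd (\<theta>' $ i) \<bullet> x" UNIV]
      by (simp add: cosh_real_pos[THEN less_imp_neq, symmetric])
    then have "(tanh has_derivative (\<lambda>h. h * (1 - tanh (snd (\<theta>' $ i) \<bullet> x)^2))) (at (snd (\<theta>' $ i) \<bullet> x))"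
      by (simp add: has_field_derivative_def mult_commute_abs)
    from has_derivative_compose[OF d_inner this] show ?thesis by (simp add: o_def)
  qed
  show ?thesis unfolding nn_model_def[abs_def] inner_nn_model_grad
    by (rule has_derivative_sum, rule has_derivative_eq_rhs[OF has_derivative_mult[OF d_fst d_tanh]])
       (auto simp: algebra_simps)
qed

lemma tangent_hyperplane_eq:
  "tangent_hyperplane \<theta> = {u. \<exists>a. u = (\<lambda>x. nn_model \<theta> x + a \<bullet> nn_model_grad \<theta> x)}"
  unfolding tangent_hyperplane_def frechet_derivative_at[OF has_derivative_nn_model, symmetric] ..

lemma nn_model_grad_in_vec_supported_on:
  "\<theta> \<in> vec_supported_on J \<Longrightarrow> nn_model_grad \<theta> x \<in> vec_supported_on J"
  by (simp add: vec_supported_on_def nn_model_grad_def zero_prod_def)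

lemma tangent_direction_eq_zero:
  fixes \<theta> a :: "(real \<times> (real^'d))^'m::finite"
  assumes "\<And>j. j \<in> J \<Longrightarrow> fst (\<theta>$j) \<noteq> 0 \<and> snd (\<theta>$j) \<noteq> 0"
    and "\<And>i j. i \<in> J \<Longrightarrow> j \<in> J \<Longrightarrow> i \<noteq> j \<Longrightarrow> snd (\<theta>$i) \<noteq> snd (\<theta>$j) \<and> snd (\<theta>$i) \<noteq> - snd (\<theta>$j)"
    and "a \<in> vec_supported_on J" "\<And>x. a \<bullet> nn_model_grad \<theta> x = 0"
  shows "a = 0"
proof -
  have outside: "a $ i = 0" if "i \<notin> J" for i using assms(3) that by (simp add: vec_supported_on_def)
  have "(\<Sum>j\<in>J. fst (a$j) * tanh (snd (\<theta>$j) \<bullet> x)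
      + ((fst (\<theta>$j) *\<^sub>R snd (a$j)) \<bullet> x) * (1 - tanh (snd (\<theta>$j) \<bullet> x)^2)) = 0" for x
  proof -
    have "a \<bullet> nn_model_grad \<theta> x = (\<Sum>j\<in>UNIV. fst (a$j) * tanh (snd (\<theta>$j) \<bullet> x)
        + ((fst (\<theta>$j) *\<^sub>R snd (a$j)) \<bullet> x) * (1 - tanh (snd (\<theta>$j) \<bullet> x)^2))"
      unfolding inner_nn_model_grad by (intro sum.cong refl) simp
    also have "\<dots> = (\<Sum>j\<in>J. fst (a$j) * tanh (snd (\<theta>$j) \<bullet> x)
        + ((fst (\<theta>$j) *\<^sub>R snd (a$j)) \<bullet> x) * (1 - tanh (snd (\<theta>$j) \<bullet> x)^2))"
      by (rule sum.mono_neutral_right) (auto simp: outside)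
    finally show ?thesis using assms(4) by simp
  qed
  then have "\<forall>j\<in>J. fst (a$j) = 0 \<and> fst (\<theta>$j) *\<^sub>R snd (a$j) = 0"
    using assms(1,2) by (intro tanh_family_independent[where w = "\<lambda>j. snd (\<theta>$j)"]) auto
  then have "a $ j = 0" for j using assms(1) outside by (cases "j \<in> J") (auto simp: prod_eq_iff)
  then show ?thesis by (simp add: vec_eq_iff)
qed

lemma sum_tanh_in_NN_class:
  fixes v :: "'i \<Rightarrow> real^'d"
  assumes "finite J" "card J \<le> k"
  shows "(\<lambda>x. \<Sum>j\<in>J. c j * tanh (v j \<bullet> x)) \<in> NN_class (int k)"
proof (cases "k = 0")
  case True
  then show ?thesis using assms by (simp add: NN_class_def)
next
  case False
  obtain h where h: "bij_betw h {0..<card J} J" using ex_bij_betw_nat_finite[OF assms(1)] by blast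
  define a where "a i = (if i < card J then c (h i) else 0)" for i
  have "(\<Sum>j\<in>J. c j * tanh (v j \<bullet> x)) = (\<Sum>i<k. a i * tanh (v (h i) \<bullet> x))" for x
  proof -
    have "(\<Sum>j\<in>J. c j * tanh (v j \<bullet> x)) = (\<Sum>i\<in>{0..<card J}. c (h i) * tanh (v (h i) \<bullet> x))"
      by (rule sum.reindex_bij_betw[OF h, symmetric])
    also have "\<dots> = (\<Sum>i<k. a i * tanh (v (h i) \<bullet> x))"
      using assms(2) by (intro sum.mono_neutral_cong_left) (auto simp: a_def)
    finally show ?thesis .
  qed
  then show ?thesis using False by (auto simp: NN_class_def)
qed

lemma card_ge_if_sum_tanh_notin_NN_class:
  fixes v :: "'i \<Rightarrow> real^'d"
  assumes "finite J" "(\<lambda>x. \<Sum>j\<in>J. c j * tanh (v j \<bullet> x)) \<notin> NN_class (int k - 1)"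
  shows "k \<le> card J"
proof (rule ccontr)
  assume "\<not> k \<le> card J"
  then have "(\<lambda>x. \<Sum>j\<in>J. c j * tanh (v j \<bullet> x)) \<in> NN_class (int (k - 1))"
    using assms(1) by (intro sum_tanh_in_NN_class) simp_all
  with \<open>\<not> k \<le> card J\<close> assms(2) show False by (simp add: of_nat_diff)
qed

lemma NN_class_realized_by_params:
  assumes "fs \<in> NN_class (int k)" "k \<le> CARD('m::finite)"
  shows "\<exists>(\<theta> :: (real \<times> (real^'d))^'m) J. card J \<le> k \<and> \<theta> \<in> vec_supported_on J \<and> nn_model \<theta> = fs"
proof -
  have "\<exists>a (w :: nat \<Rightarrow> real^'d). fs = (\<lambda>x. \<Sum>i<k. a i * tanh (w i \<bullet> x))"
    using assms(1) by (cases "k = 0") (simp_all add: NN_class_def)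
  then obtain a and w :: "nat \<Rightarrow> real^'d" where fs: "fs = (\<lambda>x. \<Sum>i<k. a i * tanh (w i \<bullet> x))"
    by blast
  obtain e :: "nat \<Rightarrow> 'm" where e: "inj_on e {..<k}"
    using card_le_inj[of "{..<k}" "UNIV::'m set"] assms(2) by auto
  define \<theta> :: "(real \<times> (real^'d))^'m" where
    "\<theta> = (\<chi> j. if j \<in> e ` {..<k} then (a (inv_into {..<k} e j), w (inv_into {..<k} e j)) else 0)"
  have "nn_model \<theta> x = fs x" for x
  proof -
    have "nn_model \<theta> x = (\<Sum>j\<in>e ` {..<k}. fst (\<theta>$j) * tanh (snd (\<theta>$j) \<bullet> x))"
      unfolding nn_model_def by (rule sum.mono_neutral_right) (auto simp: \<theta>_def)
    also have "\<dots> = fs x"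
      unfolding fs sum.reindex[OF e] using e by (intro sum.cong refl) (auto simp: \<theta>_def)
    finally show ?thesis .
  qed
  moreover have "\<theta> \<in> vec_supported_on (e ` {..<k})" by (simp add: \<theta>_def vec_supported_on_def)
  moreover have "card (e ` {..<k}) \<le> k" using card_image_le[of "{..<k}" e] by simp
  ultimately show ?thesis by blast
qed

lemma emp_loss_nonneg: "admissible_loss loss \<Longrightarrow> 0 \<le> emp_loss loss fs xs u"
  unfolding emp_loss_def admissible_loss_def by (auto intro!: divide_nonneg_nonneg sum_nonneg)

lemma emp_loss_eq_0_iff:
  assumes "admissible_loss loss"
  shows "emp_loss loss fs xs u = 0 \<longleftrightarrow> (\<forall>x\<in>set xs. u x = fs x)"
proof (cases "xs = []")
  case False
  have "\<forall>z. loss z \<ge> 0" "\<forall>u v. loss (u, v) = 0 \<longleftrightarrow> u = v"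
    using assms unfolding admissible_loss_def by auto
  then have "emp_loss loss fs xs u = 0 \<longleftrightarrow> (\<forall>i<length xs. u (xs ! i) = fs (xs ! i))"
    using False by (auto simp: emp_loss_def sum_nonneg_eq_0_iff)
  then show ?thesis by (simp add: all_set_conv_all_nth)
qed (simp add: emp_loss_def)

lemma minimizers_on_emp_loss:
  assumes "admissible_loss loss" "fs \<in> S"
  shows "minimizers_on (emp_loss loss fs xs) S = {u \<in> S. \<forall>x\<in>set xs. u x = fs x}"
proof -
  have "emp_loss loss fs xs fs = 0" by (simp add: emp_loss_eq_0_iff[OF assms(1)])
  have "u \<in> minimizers_on (emp_loss loss fs xs) S \<longleftrightarrow> u \<in> S \<and> emp_loss loss fs xs u = 0" for u
  proof
    assume "u \<in> minimizers_on (emp_loss loss fs xs) S"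
    then have "u \<in> S" "emp_loss loss fs xs u \<le> emp_loss loss fs xs fs"
      using assms(2) by (auto simp: minimizers_on_def)
    moreover have "0 \<le> emp_loss loss fs xs u" by (rule emp_loss_nonneg[OF assms(1)])
    ultimately show "u \<in> S \<and> emp_loss loss fs xs u = 0"
      using \<open>emp_loss loss fs xs fs = 0\<close> by linarith
  next
    assume "u \<in> S \<and> emp_loss loss fs xs u = 0"
    then show "u \<in> minimizers_on (emp_loss loss fs xs) S"
      by (auto simp: minimizers_on_def intro: emp_loss_nonneg[OF assms(1)])
  qed
  then show ?thesis using emp_loss_eq_0_iff[OF assms(1)] by blast
qed

lemma minimizers_on_tangent_hyperplane:
  assumes "admissible_loss loss" "nn_model \<theta> = fs"
  shows "minimizers_on (emp_loss loss fs xs) (tangent_hyperplane \<theta>)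
    = {(\<lambda>x. fs x + a \<bullet> nn_model_grad \<theta> x) | a. \<forall>x\<in>set xs. a \<bullet> nn_model_grad \<theta> x = 0}"
proof -
  have "fs \<in> tangent_hyperplane \<theta>"
    unfolding tangent_hyperplane_eq assms(2) by (intro CollectI exI[of _ 0]) simp
  then have "minimizers_on (emp_loss loss fs xs) (tangent_hyperplane \<theta>)
      = {u \<in> tangent_hyperplane \<theta>. \<forall>x\<in>set xs. u x = fs x}"
    by (rule minimizers_on_emp_loss[OF assms(1)])
  then show ?thesis unfolding tangent_hyperplane_eq assms(2) by auto
qed

section \<open>The optimistic sample size\<close>

lemma dim_params_supported_on:
  "dim (vec_supported_on J :: ((real \<times> (real^'d))^'m::finite) set) = card J * (CARD('d) + 1)"
  by (simp add: dim_vec_supported_on)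

lemma LLR_guarantee_param_count:
  fixes fs :: "real^'d \<Rightarrow> real"
  assumes "admissible_loss loss" "fs \<in> NN_class (int k)" "k \<le> CARD('m::finite)"
  shows "LLR_guarantee TYPE('m) loss fs (k * (CARD('d) + 1))"
proof -
  obtain \<theta> :: "(real \<times> (real^'d))^'m" and J
    where J: "card J \<le> k" "\<theta> \<in> vec_supported_on J" and fs: "nn_model \<theta> = fs"
    using NN_class_realized_by_params[OF assms(2,3)] by blast
  have "range (nn_model_grad \<theta>) \<subseteq> vec_supported_on J"
    using nn_model_grad_in_vec_supported_on[OF J(2)] by blast
  then have "dim (range (nn_model_grad \<theta>)) \<le> card J * (CARD('d) + 1)"
    unfolding dim_params_supported_on[symmetric] by (rule dim_subset)
  also have "\<dots> \<le> k * (CARD('d) + 1)" using J(1) by (rule mult_le_mono1)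
  finally obtain xs where xs: "length xs = k * (CARD('d) + 1)"
    "\<forall>a. (\<forall>x\<in>set xs. a \<bullet> nn_model_grad \<theta> x = 0) \<longrightarrow> (\<forall>x. a \<bullet> nn_model_grad \<theta> x = 0)"
    using exists_list_determining_orthogonality by blast
  have "minimizers_on (emp_loss loss fs xs) (tangent_hyperplane \<theta>) = {fs}"
    unfolding minimizers_on_tangent_hyperplane[OF assms(1) fs]
  proof (intro equalityI subsetI)
    fix u assume "u \<in> {(\<lambda>x. fs x + a \<bullet> nn_model_grad \<theta> x) | a. \<forall>x\<in>set xs. a \<bullet> nn_model_grad \<theta> x = 0}"
    then obtain a where "u = (\<lambda>x. fs x + a \<bullet> nn_model_grad \<theta> x)" "\<forall>x\<in>set xs. a \<bullet> nn_model_grad \<theta> x = 0"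
      by blast
    with xs(2) show "u \<in> {fs}" by simp
  next
    fix u assume "u \<in> {fs}"
    then have "u = (\<lambda>x. fs x + 0 \<bullet> nn_model_grad \<theta> x)" by simp
    then show "u \<in> {(\<lambda>x. fs x + a \<bullet> nn_model_grad \<theta> x) | a. \<forall>x\<in>set xs. a \<bullet> nn_model_grad \<theta> x = 0}"
      by fastforce
  qed
  then show ?thesis unfolding LLR_guarantee_def target_set_def
    by (intro exI[of _ xs] exI[of _ \<theta>] conjI) (simp_all add: xs(1) fs)
qed

lemma LLR_guarantee_imp_param_count_le:
  fixes fs :: "real^'d \<Rightarrow> real"
  assumes "admissible_loss loss" "fs \<notin> NN_class (int k - 1)" "LLR_guarantee TYPE('m::finite) loss fs n"
  shows "k * (CARD('d) + 1) \<le> n"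
proof -
  obtain xs and \<theta> :: "(real \<times> (real^'d))^'m" where xs: "length xs = n" and fs: "nn_model \<theta> = fs"
    and unique: "minimizers_on (emp_loss loss fs xs) (tangent_hyperplane \<theta>) = {fs}"
    using assms(3) unfolding LLR_guarantee_def target_set_def by blast
  obtain J c where J: "\<forall>j\<in>J. fst (\<theta>$j) \<noteq> 0 \<and> snd (\<theta>$j) \<noteq> 0"
    "\<forall>i\<in>J. \<forall>j\<in>J. i \<noteq> j \<longrightarrow> snd (\<theta>$i) \<noteq> snd (\<theta>$j) \<and> snd (\<theta>$i) \<noteq> - snd (\<theta>$j)"
    and sum_J: "\<forall>x. (\<Sum>i\<in>UNIV. fst (\<theta>$i) * tanh (snd (\<theta>$i) \<bullet> x))
      = (\<Sum>j\<in>J. c j * tanh (snd (\<theta>$j) \<bullet> x))"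
    using tanh_sum_reduced_form[OF finite[of UNIV], of "\<lambda>i. fst (\<theta>$i)" "\<lambda>i. snd (\<theta>$i)"] by blast
  have fs_J: "fs = (\<lambda>x. \<Sum>j\<in>J. c j * tanh (snd (\<theta>$j) \<bullet> x))"
    using sum_J fs unfolding nn_model_def by auto
  have "k \<le> card J" using finite assms(2)[unfolded fs_J] by (rule card_ge_if_sum_tanh_notin_NN_class)
  moreover have "card J * (CARD('d) + 1) \<le> n"
  proof (rule ccontr)
    let ?Y = "nn_model_grad \<theta> ` set xs"
    assume "\<not> card J * (CARD('d) + 1) \<le> n"
    moreover have "card ?Y \<le> n"
      using card_image_le[of "set xs" "nn_model_grad \<theta>"] card_length[of xs] xs by simp
    ultimately obtain a where a: "a \<in> vec_supported_on J" "a \<noteq> 0" "\<forall>y\<in>?Y. a \<bullet> y = 0"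
      using exists_nonzero_orthogonal_in_subspace[OF subspace_vec_supported_on, of ?Y J]
      unfolding dim_params_supported_on by auto
    then have "(\<lambda>x. fs x + a \<bullet> nn_model_grad \<theta> x) \<in> minimizers_on (emp_loss loss fs xs) (tangent_hyperplane \<theta>)"
      unfolding minimizers_on_tangent_hyperplane[OF assms(1) fs] by blast
    then have "a \<bullet> nn_model_grad \<theta> x = 0" for x using unique by (simp add: fun_eq_iff)
    then have "a = 0" using J by (intro tangent_direction_eq_zero[OF _ _ a(1)]) auto
    with a(2) show False ..
  qed
  ultimately show ?thesis using mult_le_mono1[of k "card J" "CARD('d) + 1"] by linarith
qed

theorem mainTheorem17:
  fixes loss :: "real \<times> real \<Rightarrow> real" and fs :: "real^'d \<Rightarrow> real" and k :: nat
  assumes "admissible_loss loss"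
    and "k \<le> CARD('m::finite)"
    and "fs \<in> NN_class (int k) - NN_class (int k - 1)"
  shows "LLR_guarantee TYPE('m) loss fs (k * (CARD('d) + 1))
    \<and> optimistic_sample_size TYPE('m) loss fs = k * (CARD('d) + 1)"
proof
  show guarantee: "LLR_guarantee TYPE('m) loss fs (k * (CARD('d) + 1))"
    using assms(3) by (intro LLR_guarantee_param_count[OF assms(1) _ assms(2)]) simp
  show "optimistic_sample_size TYPE('m) loss fs = k * (CARD('d) + 1)"
    unfolding optimistic_sample_size_def
  proof (rule Least_equality[where P = "LLR_guarantee TYPE('m) loss fs", OF guarantee])
    fix n assume "LLR_guarantee TYPE('m) loss fs n"
    with assms(3) show "k * (CARD('d) + 1) \<le> n"
      by (intro LLR_guarantee_imp_param_count_le[OF assms(1)]) simp_all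
  qed
qed

end
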